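(* Under the standing setting and assumptions (A1)–(A3) described in the context, assume $\mathrm{int}\,\mathcal X_+\cap\mathcal M\neq\emptyset$. Then for every $\varepsilon>0$ the map $\mathcal R_\varepsilon$ is lower semicontinuous at every point of $\mathcal X$.
   Context: Let $\mathcal X$ be a Hausdorff, first countable, locally convex topological vector space over $\mathbb R$, partially ordered by a partial order $\geq$ with positive cone $\mathcal X_+=\{X\in\mathcal X: X\geq 0\}$. Let $\mathcal M\subset\mathcal X$ be a vector subspace with $1<\dim\mathcal M<\infty$, carrying the relative topology, and let $\pi:\mathcal M\to\mathbb R$ be linear. Standing assumptions: (A1) there is $U\in\mathcal M\cap\mathcal X_+$ with $\pi(U)=1$; (A2) $\mathcal A\subsetneq\mathcal X$ is closed, contains $0$, and satisfies $\mathcal A+\mathcal X_+\subset\mathcal A$; (A3) the map $\rho(X)=\inf\{\pi(Z): Z\in\mathcal M,\ X+Z\in\mathcal A\}$ is finitely valued and continuous on $\mathcal X$. For $\varepsilon>0$, $\mathcal R_\varepsilon(X)=\{Z\in\mathcal M: X+Z\in\mathcal A,\ \pi(Z)<\rho(X)+\varepsilon\}$. $\mathrm{int}$ denotes interior in $\mathcal X$. A set-valued map $\mathcal S:\mathcal X\rightrightarrows\mathcal M$ is lower semicontinuous at $X$ if for every open $\mathcal U\subset\mathcal M$ with $\mathcal S(X)\cap\mathcal U\neq\emptyset$ there is an open neighborhood $\mathcal U_X$ of $X$ with $\mathcal S(Y)\cap\mathcal U\neq\emptyset$ for all $Y\in\mathcal U_X$. *)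

theory Defs
  imports "HOL-Analysis.Analysis"
begin

definition tvs_axioms :: "('a::{real_vector,topological_space}) itself \<Rightarrow> bool" where
  "tvs_axioms _ \<longleftrightarrow>
     continuous_on UNIV (\<lambda>p::'a \<times> 'a. fst p + snd p) \<and>
     continuous_on UNIV (\<lambda>p::real \<times> 'a. fst p *\<^sub>R snd p)"

definition locally_convex :: "('a::{real_vector,topological_space}) itself \<Rightarrow> bool" where
  "locally_convex _ \<longleftrightarrow>
     (\<forall>W::'a set. open W \<and> 0 \<in> W \<longrightarrow> (\<exists>C. open C \<and> convex C \<and> 0 \<in> C \<and> C \<subseteq> W))"

definition pos_cone :: "'a::ordered_real_vector set" where
  "pos_cone = {X. X \<ge> 0}"

definition linear_on_sub :: "'a::real_vector set \<Rightarrow> ('a \<Rightarrow> real) \<Rightarrow> bool" where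
  "linear_on_sub M \<pi> \<longleftrightarrow>
     (\<forall>x\<in>M. \<forall>y\<in>M. \<pi> (x + y) = \<pi> x + \<pi> y) \<and>
     (\<forall>c. \<forall>x\<in>M. \<pi> (c *\<^sub>R x) = c * \<pi> x)"

definition adm_prices :: "'a::real_vector set \<Rightarrow> 'a set \<Rightarrow> ('a \<Rightarrow> real) \<Rightarrow> 'a \<Rightarrow> real set" where
  "adm_prices A M \<pi> X = {\<pi> Z | Z. Z \<in> M \<and> X + Z \<in> A}"

definition rho :: "'a::real_vector set \<Rightarrow> 'a set \<Rightarrow> ('a \<Rightarrow> real) \<Rightarrow> 'a \<Rightarrow> real" where
  "rho A M \<pi> X = Inf (adm_prices A M \<pi> X)"

definition Reps :: "'a::real_vector set \<Rightarrow> 'a set \<Rightarrow> ('a \<Rightarrow> real) \<Rightarrow> real \<Rightarrow> 'a \<Rightarrow> 'a set" where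
  "Reps A M \<pi> \<epsilon> X = {Z \<in> M. X + Z \<in> A \<and> \<pi> Z < rho A M \<pi> X + \<epsilon>}"

definition lsc_at :: "'a::topological_space set \<Rightarrow> ('a \<Rightarrow> 'a set) \<Rightarrow> 'a \<Rightarrow> bool" where
  "lsc_at M S X \<longleftrightarrow>
     (\<forall>U. openin (top_of_set M) U \<and> S X \<inter> U \<noteq> {} \<longrightarrow>
        (\<exists>V. open V \<and> X \<in> V \<and> (\<forall>Y\<in>V. S Y \<inter> U \<noteq> {})))"

end

theory Submission
  imports Defs
begin

text \<open>
  Take \<open>Z \<in> \<R>\<^sub>\<epsilon>(X)\<close> in the open set \<open>\<U>\<close> and an interior point \<open>U\<^sub>0\<close> of the positive
  cone lying in \<open>\<M>\<close>. For small \<open>\<delta> > 0\<close> the shifted portfolio \<open>Z + \<delta>U\<^sub>0\<close> is still in \<open>\<U>\<close> and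
  its price is still below \<open>\<rho>(X) + \<epsilon>\<close> by a margin. For \<open>Y\<close> near \<open>X\<close>, the vector
  \<open>Y - X + \<delta>U\<^sub>0\<close> is positive because \<open>\<delta>U\<^sub>0\<close> is interior, so \<open>Y + Z + \<delta>U\<^sub>0\<close> is acceptable by
  monotonicity of \<open>\<A>\<close>; continuity of \<open>\<rho>\<close> keeps the price bound, hence
  \<open>Z + \<delta>U\<^sub>0 \<in> \<R>\<^sub>\<epsilon>(Y) \<inter> \<U>\<close>.
\<close>

lemma tvs_continuous_on_add:
  fixes f g :: "'b::topological_space \<Rightarrow> 'a::{real_vector,topological_space}"
  assumes "tvs_axioms TYPE('a)" "continuous_on S f" "continuous_on S g"
  shows "continuous_on S (\<lambda>x. f x + g x)"
proof -
  have "continuous_on UNIV (\<lambda>p::'a \<times> 'a. fst p + snd p)"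
    using assms(1) unfolding tvs_axioms_def by blast
  from continuous_on_compose[OF continuous_on_Pair[OF assms(2,3)] continuous_on_subset[OF this]]
  show ?thesis by (simp add: o_def)
qed

lemma tvs_continuous_on_scaleR:
  fixes f :: "'b::topological_space \<Rightarrow> real" and g :: "'b \<Rightarrow> 'a::{real_vector,topological_space}"
  assumes "tvs_axioms TYPE('a)" "continuous_on S f" "continuous_on S g"
  shows "continuous_on S (\<lambda>x. f x *\<^sub>R g x)"
proof -
  have "continuous_on UNIV (\<lambda>p::real \<times> 'a. fst p *\<^sub>R snd p)"
    using assms(1) unfolding tvs_axioms_def by blast
  from continuous_on_compose[OF continuous_on_Pair[OF assms(2,3)] continuous_on_subset[OF this]]
  show ?thesis by (simp add: o_def)
qed

lemma continuous_on_UNIV_tendsto: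
  assumes "continuous_on UNIV f"
  shows "(f \<longlongrightarrow> f x) (nhds x)"
  using assms by (simp add: continuous_on_def tendsto_at_iff_tendsto_nhds)

lemma tvs_exists_small_step_in_open:
  fixes Z U :: "'a::{real_vector,topological_space}"
  assumes tvs: "tvs_axioms TYPE('a)" and "open W" "Z \<in> W" "\<eta> > 0"
  shows "\<exists>\<delta>>0. Z + \<delta> *\<^sub>R U \<in> W \<and> \<delta> * c < \<eta>"
proof -
  have "\<forall>\<^sub>F \<delta> in at_right 0. Z + \<delta> *\<^sub>R U \<in> W \<and> \<delta> * c < \<eta> \<and> \<delta> > 0"
  proof (intro eventually_conj)
    have "continuous_on UNIV (\<lambda>t::real. Z + t *\<^sub>R U)"
      by (intro tvs_continuous_on_add[OF tvs] tvs_continuous_on_scaleR[OF tvs] continuous_intros)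
    from topological_tendstoD[OF continuous_on_UNIV_tendsto[OF this] \<open>open W\<close>] \<open>Z \<in> W\<close>
    show "\<forall>\<^sub>F \<delta> in at_right 0. Z + \<delta> *\<^sub>R U \<in> W"
      by (simp add: filter_leD[OF at_within_le_nhds])
    have "((\<lambda>\<delta>. \<delta> * c) \<longlongrightarrow> 0) (at_right 0)"
      by (auto intro!: tendsto_eq_intros)
    then show "\<forall>\<^sub>F \<delta> in at_right 0. \<delta> * c < \<eta>"
      using \<open>\<eta> > 0\<close> by (rule order_tendstoD)
  qed (simp add: eventually_at_right_less)
  then show ?thesis
    using eventually_happens'[OF trivial_limit_at_right_real] by blast
qed

lemma tvs_eventually_shift_in_pos_cone:
  fixes X U :: "'a::{ordered_real_vector,topological_space}"
  assumes tvs: "tvs_axioms TYPE('a)" and U: "U \<in> interior pos_cone" and "\<delta> > 0"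
  shows "\<forall>\<^sub>F Y in nhds X. Y - X + \<delta> *\<^sub>R U \<in> pos_cone"
proof -
  define k where "k Y = (1 / \<delta>) *\<^sub>R (Y + (\<delta> *\<^sub>R U - X))" for Y
  have "continuous_on UNIV k"
    unfolding k_def by (intro tvs_continuous_on_add[OF tvs] tvs_continuous_on_scaleR[OF tvs]
        continuous_intros)
  moreover have "k X = U"
    using \<open>\<delta> > 0\<close> by (simp add: k_def)
  ultimately have "\<forall>\<^sub>F Y in nhds X. k Y \<in> interior pos_cone"
    using topological_tendstoD[OF continuous_on_UNIV_tendsto open_interior] U by metis
  then show ?thesis
  proof (rule eventually_mono)
    fix Y assume "k Y \<in> interior pos_cone"
    then have "0 \<le> k Y"
      using interior_subset[of pos_cone] by (auto simp: pos_cone_def)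
    then have "0 \<le> \<delta> *\<^sub>R k Y"
      using \<open>\<delta> > 0\<close> by (simp add: scaleR_nonneg_nonneg)
    also have "\<delta> *\<^sub>R k Y = Y - X + \<delta> *\<^sub>R U"
      using \<open>\<delta> > 0\<close> by (simp add: k_def algebra_simps)
    finally show "Y - X + \<delta> *\<^sub>R U \<in> pos_cone"
      by (simp add: pos_cone_def)
  qed
qed

lemma lsc_atI:
  assumes "\<And>U. openin (top_of_set M) U \<Longrightarrow> S X \<inter> U \<noteq> {} \<Longrightarrow> \<forall>\<^sub>F Y in nhds X. S Y \<inter> U \<noteq> {}"
  shows "lsc_at M S X"
  using assms unfolding lsc_at_def eventually_nhds by blast

lemma lsc_at_Reps:
  fixes M A :: "'a::{ordered_real_vector,topological_space} set" and \<pi> :: "'a \<Rightarrow> real"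
  assumes tvs: "tvs_axioms TYPE('a)"
    and M: "subspace M" and \<pi>: "linear_on_sub M \<pi>"
    and A_mono: "\<forall>X\<in>A. \<forall>P\<in>pos_cone. X + P \<in> A"
    and \<rho>_cont: "continuous_on UNIV (rho A M \<pi>)"
    and U0: "U0 \<in> interior pos_cone" "U0 \<in> M"
  shows "lsc_at M (Reps A M \<pi> \<epsilon>) X"
proof (rule lsc_atI)
  fix U assume "openin (top_of_set M) U" "Reps A M \<pi> \<epsilon> X \<inter> U \<noteq> {}"
  then obtain W Z where W: "open W" "U = M \<inter> W" and Z: "Z \<in> Reps A M \<pi> \<epsilon> X" "Z \<in> U"
    by (auto simp: openin_open)
  then have ZM: "Z \<in> M" and ZA: "X + Z \<in> A" and ZW: "Z \<in> W"
    and Z_price: "\<pi> Z < rho A M \<pi> X + \<epsilon>"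
    by (auto simp: Reps_def)
  define \<eta> where "\<eta> = (rho A M \<pi> X + \<epsilon> - \<pi> Z) / 2"
  have "\<eta> > 0"
    using Z_price by (simp add: \<eta>_def)
  obtain \<delta> where "\<delta> > 0" and \<delta>W: "Z + \<delta> *\<^sub>R U0 \<in> W" and \<delta>_price: "\<delta> * \<pi> U0 < \<eta>"
    using tvs_exists_small_step_in_open[OF tvs W(1) ZW \<open>\<eta> > 0\<close>] by blast
  define Z' where "Z' = Z + \<delta> *\<^sub>R U0"
  have Z'M: "Z' \<in> M"
    using ZM U0(2) M by (simp add: Z'_def subspace_add subspace_scale)
  have Z'_price: "\<pi> Z' = \<pi> Z + \<delta> * \<pi> U0"
    using \<pi> ZM U0(2) M unfolding linear_on_sub_def Z'_def by (simp add: subspace_scale)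
  have "\<forall>\<^sub>F Y in nhds X. Y - X + \<delta> *\<^sub>R U0 \<in> pos_cone \<and> rho A M \<pi> X - \<eta> < rho A M \<pi> Y"
    using tvs_eventually_shift_in_pos_cone[OF tvs U0(1) \<open>\<delta> > 0\<close>]
      order_tendstoD(1)[OF continuous_on_UNIV_tendsto[OF \<rho>_cont]] \<open>\<eta> > 0\<close>
    by (intro eventually_conj) auto
  then show "\<forall>\<^sub>F Y in nhds X. Reps A M \<pi> \<epsilon> Y \<inter> U \<noteq> {}"
  proof (rule eventually_mono)
    fix Y assume Y: "Y - X + \<delta> *\<^sub>R U0 \<in> pos_cone \<and> rho A M \<pi> X - \<eta> < rho A M \<pi> Y"
    have "(X + Z) + (Y - X + \<delta> *\<^sub>R U0) \<in> A"
      using A_mono ZA Y by blast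
    then have "Y + Z' \<in> A"
      by (simp add: Z'_def algebra_simps)
    moreover have "\<pi> Z' < rho A M \<pi> Y + \<epsilon>"
      using conjunct2[OF Y] Z'_price \<delta>_price unfolding \<eta>_def by (simp add: field_simps)
    ultimately have "Z' \<in> Reps A M \<pi> \<epsilon> Y"
      using Z'M by (simp add: Reps_def)
    moreover have "Z' \<in> U"
      using Z'M \<delta>W W(2) by (simp add: Z'_def)
    ultimately show "Reps A M \<pi> \<epsilon> Y \<inter> U \<noteq> {}"
      by blast
  qed
qed

theorem mainTheorem19:
  fixes M A :: "'a::{ordered_real_vector, t2_space, first_countable_topology} set"
    and \<pi> :: "'a \<Rightarrow> real"
  assumes tvs: "tvs_axioms TYPE('a)"
    and lc: "locally_convex TYPE('a)"
    and M_sub: "subspace M"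
    and M_fin: "\<exists>B. finite B \<and> span B = M"
    and M_dim: "1 < dim M"
    and pi_lin: "linear_on_sub M \<pi>"
    and A1: "\<exists>U\<in>M \<inter> pos_cone. \<pi> U = 1"
    and A2_closed: "closed A" and A2_zero: "0 \<in> A" and A2_proper: "A \<noteq> UNIV"
    and A2_mono: "\<forall>X\<in>A. \<forall>P\<in>pos_cone. X + P \<in> A"
    and A3_finite: "\<forall>X. adm_prices A M \<pi> X \<noteq> {} \<and> bdd_below (adm_prices A M \<pi> X)"
    and A3_cont: "continuous_on UNIV (rho A M \<pi>)"
    and int: "interior pos_cone \<inter> M \<noteq> {}"
  shows "\<forall>\<epsilon>>0. \<forall>X. lsc_at M (Reps A M \<pi> \<epsilon>) X"
proof -
  obtain U0 where "U0 \<in> interior pos_cone" "U0 \<in> M"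
    using int by blast
  then show ?thesis
    using lsc_at_Reps[OF tvs M_sub pi_lin A2_mono A3_cont] by blast
qed

end
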